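(* Consider an instance of the MA-HLP and the formulation $FZ\text{-}S$ as described in the context. Let $(\overline{\mathbf y},\overline{\mathbf z},\overline{\boldsymbol\eta})$ be an optimal solution of the LP relaxation of $FZ\text{-}S$, with $\overline{\mathbf y}\in[0,1]^E$, $\overline{\mathbf z}\in[0,1]^V$. For $r\in R$ and $h\in T^r$, let $\overline u_{rh}=\overline y_{e_h}$ if $h\in T^r_y$ and $\overline u_{rh}=\overline z_{i_h}$ if $h\in T^r_z$, and let $\overline t_r=\min\{t\in T^r:\ \sum_{h=1}^{t}\overline u_{rh}\ge 1\}$ (this set being presupposed nonempty). Then the optimal value of the LP relaxation of $FZ\text{-}S$ is \[\overline v_{FZS}=\sum_{i\in V}f_i\overline z_i+\sum_{r\in R}\Big[\overline v_{r\overline t_r}\Big(1-\sum_{h=1}^{\overline t_r-1}\overline u_{rh}\Big)+\sum_{h=1}^{\overline t_r-1}\overline v_{rh}\,\overline u_{rh}\Big].\]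
   Context: Instance: a complete network with node set $V=\{1,\dots,n\}$, unit routing costs $c_{ij}\ge0$ ($i,j\in V$) satisfying the triangle inequality with $c_{ii}=0$; $E=\{ij: i<j\}$ is the set of undirected edges and $\delta(i)$ the set of edges incident with $i$. Each node $i$ has hub setup cost $f_i\ge0$. Commodities $r\in R$ are triplets $(o^r,d^r,w^r)$ with $w^r\ge0$. Parameters $0\le\alpha\le1$, $\gamma,\theta>\alpha$. For $r\in R$, $i,j\in V$: $C_{rij}=w^r(\gamma c_{o^ri}+\alpha c_{ij}+\theta c_{jd^r})$; $F_{re}=\min\{C_{rij},C_{rji}\}$ for $e=ij\in E$; $H_{ri}=C_{rii}$. For $r\in R$ let $E^r=\{e=ij\in E: F_{re}<\min\{H_{ri},H_{rj}\}\}$ and $V^r=\{i\in V:\ \text{there is } e\in\delta(i) \text{ with } H_{ri}<F_{re}\}$. Let $T^r=\{1,\dots,|E^r|+|V^r|\}$ index the values $\{F_{re}\}_{e\in E^r}\cup\{H_{ri}\}_{i\in V^r}$ sorted in nondecreasing order (ties broken arbitrarily) as $\overline v_{r1}\le\overline v_{r2}\le\cdots$; $T^r=T^r_y\cup T^r_z$ where for $t\in T^r_y$ the value $\overline v_{rt}=F_{re_t}$ comes from edge $e_t\in E^r$, and for $t\in T^r_z$ the value $\overline v_{rt}=H_{ri_t}$ comes from node $i_t\in V^r$. Formulation $FZ\text{-}S$: variables $y_e\in\{0,1\}$ ($e\in E$), $z_i\in\{0,1\}$ ($i\in V$), $\eta^r\ge0$ ($r\in R$); minimize $\sum_{i\in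 V}f_iz_i+\sum_{r\in R}\eta^r$ subject to, for all $r\in R$, $t\in T^r$: $\eta^r\ge\overline v_{rt}+\sum_{h\in T^r_y,\,h\le t-1}(F_{re_h}-\overline v_{rt})y_{e_h}+\sum_{h\in T^r_z,\,h\le t-1}(H_{ri_h}-\overline v_{rt})z_{i_h}$; and $y_e\le z_i$, $y_e\le z_j$ for all $e=ij\in E$. The LP relaxation replaces the binary constraints by $y_e,z_i\in[0,1]$. *)

theory Defs
  imports Main "HOL.Real"
begin

text \<open>Undirected edges e = ij with i < j are encoded as pairs (i,j).\<close>

definition nodes :: "nat \<Rightarrow> nat set" where
  "nodes n = {1..n}"

definition edges :: "nat \<Rightarrow> (nat \<times> nat) set" where
  "edges n = {(i,j). 1 \<le> i \<and> i < j \<and> j \<le> n}"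

definition incident :: "nat \<Rightarrow> nat \<Rightarrow> (nat \<times> nat) set" where
  "incident n i = {e \<in> edges n. fst e = i \<or> snd e = i}"

definition Ccost :: "(nat \<Rightarrow> nat \<Rightarrow> real) \<Rightarrow> real \<Rightarrow> real \<Rightarrow> real \<Rightarrow>
    ('r \<Rightarrow> nat) \<Rightarrow> ('r \<Rightarrow> nat) \<Rightarrow> ('r \<Rightarrow> real) \<Rightarrow> 'r \<Rightarrow> nat \<Rightarrow> nat \<Rightarrow> real" where
  "Ccost c \<alpha> \<gamma> \<theta> orig dest w r i j =
     w r * (\<gamma> * c (orig r) i + \<alpha> * c i j + \<theta> * c j (dest r))"

definition Fval :: "('r \<Rightarrow> nat \<Rightarrow> nat \<Rightarrow> real) \<Rightarrow> 'r \<Rightarrow> nat \<times> nat \<Rightarrow> real" where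
  "Fval C r e = min (C r (fst e) (snd e)) (C r (snd e) (fst e))"

definition Hval :: "('r \<Rightarrow> nat \<Rightarrow> nat \<Rightarrow> real) \<Rightarrow> 'r \<Rightarrow> nat \<Rightarrow> real" where
  "Hval C r i = C r i i"

definition Er :: "nat \<Rightarrow> ('r \<Rightarrow> nat \<Rightarrow> nat \<Rightarrow> real) \<Rightarrow> 'r \<Rightarrow> (nat \<times> nat) set" where
  "Er n C r = {e \<in> edges n. Fval C r e < min (Hval C r (fst e)) (Hval C r (snd e))}"

definition Vr :: "nat \<Rightarrow> ('r \<Rightarrow> nat \<Rightarrow> nat \<Rightarrow> real) \<Rightarrow> 'r \<Rightarrow> nat set" where
  "Vr n C r = {i \<in> nodes n. \<exists>e \<in> incident n i. Hval C r i < Fval C r e}"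

text \<open>The items indexed by T^r: edges of E^r (Inl) and nodes of V^r (Inr).\<close>
definition items :: "nat \<Rightarrow> ('r \<Rightarrow> nat \<Rightarrow> nat \<Rightarrow> real) \<Rightarrow> 'r \<Rightarrow> ((nat \<times> nat) + nat) set" where
  "items n C r = Inl ` Er n C r \<union> Inr ` Vr n C r"

definition itemval :: "('r \<Rightarrow> nat \<Rightarrow> nat \<Rightarrow> real) \<Rightarrow> 'r \<Rightarrow> (nat \<times> nat) + nat \<Rightarrow> real" where
  "itemval C r x = (case x of Inl e \<Rightarrow> Fval C r e | Inr i \<Rightarrow> Hval C r i)"

definition itemvar :: "(nat \<times> nat \<Rightarrow> real) \<Rightarrow> (nat \<Rightarrow> real) \<Rightarrow> (nat \<times> nat) + nat \<Rightarrow> real" where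
  "itemvar y z x = (case x of Inl e \<Rightarrow> y e | Inr i \<Rightarrow> z i)"

definition Tsize :: "nat \<Rightarrow> ('r \<Rightarrow> nat \<Rightarrow> nat \<Rightarrow> real) \<Rightarrow> 'r \<Rightarrow> nat" where
  "Tsize n C r = card (Er n C r) + card (Vr n C r)"

text \<open>A sorting of the items (ties broken arbitrarily): position t in T^r = {1..|T^r|}
  is assigned item sigma t; values nondecreasing.\<close>
definition valid_order :: "nat \<Rightarrow> ('r \<Rightarrow> nat \<Rightarrow> nat \<Rightarrow> real) \<Rightarrow> 'r \<Rightarrow>
    (nat \<Rightarrow> (nat \<times> nat) + nat) \<Rightarrow> bool" where
  "valid_order n C r \<sigma> \<longleftrightarrow>
     bij_betw \<sigma> {1..Tsize n C r} (items n C r) \<and>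
     (\<forall>s t. 1 \<le> s \<longrightarrow> s \<le> t \<longrightarrow> t \<le> Tsize n C r \<longrightarrow> itemval C r (\<sigma> s) \<le> itemval C r (\<sigma> t))"

definition vbar :: "('r \<Rightarrow> nat \<Rightarrow> nat \<Rightarrow> real) \<Rightarrow> ('r \<Rightarrow> nat \<Rightarrow> (nat \<times> nat) + nat) \<Rightarrow> 'r \<Rightarrow> nat \<Rightarrow> real" where
  "vbar C \<sigma> r t = itemval C r (\<sigma> r t)"

definition uvar :: "('r \<Rightarrow> nat \<Rightarrow> (nat \<times> nat) + nat) \<Rightarrow> (nat \<times> nat \<Rightarrow> real) \<Rightarrow> (nat \<Rightarrow> real) \<Rightarrow> 'r \<Rightarrow> nat \<Rightarrow> real" where
  "uvar \<sigma> y z r h = itemvar y z (\<sigma> r h)"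

definition FZS_LP_feasible :: "nat \<Rightarrow> ('r \<Rightarrow> nat \<Rightarrow> nat \<Rightarrow> real) \<Rightarrow> 'r set \<Rightarrow>
    ('r \<Rightarrow> nat \<Rightarrow> (nat \<times> nat) + nat) \<Rightarrow>
    (nat \<times> nat \<Rightarrow> real) \<Rightarrow> (nat \<Rightarrow> real) \<Rightarrow> ('r \<Rightarrow> real) \<Rightarrow> bool" where
  "FZS_LP_feasible n C R \<sigma> y z \<eta> \<longleftrightarrow>
     (\<forall>e \<in> edges n. 0 \<le> y e \<and> y e \<le> 1 \<and> y e \<le> z (fst e) \<and> y e \<le> z (snd e)) \<and>
     (\<forall>i \<in> nodes n. 0 \<le> z i \<and> z i \<le> 1) \<and>
     (\<forall>r \<in> R. 0 \<le> \<eta> r \<and>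
        (\<forall>t \<in> {1..Tsize n C r}.
           \<eta> r \<ge> vbar C \<sigma> r t
                 + (\<Sum>h \<in> {1..<t}. (vbar C \<sigma> r h - vbar C \<sigma> r t) * uvar \<sigma> y z r h)))"

definition FZS_obj :: "nat \<Rightarrow> (nat \<Rightarrow> real) \<Rightarrow> 'r set \<Rightarrow> (nat \<Rightarrow> real) \<Rightarrow> ('r \<Rightarrow> real) \<Rightarrow> real" where
  "FZS_obj n f R z \<eta> = (\<Sum>i \<in> nodes n. f i * z i) + (\<Sum>r \<in> R. \<eta> r)"

definition FZS_LP_optimal :: "nat \<Rightarrow> ('r \<Rightarrow> nat \<Rightarrow> nat \<Rightarrow> real) \<Rightarrow> (nat \<Rightarrow> real) \<Rightarrow> 'r set \<Rightarrow>
    ('r \<Rightarrow> nat \<Rightarrow> (nat \<times> nat) + nat) \<Rightarrow>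
    (nat \<times> nat \<Rightarrow> real) \<Rightarrow> (nat \<Rightarrow> real) \<Rightarrow> ('r \<Rightarrow> real) \<Rightarrow> bool" where
  "FZS_LP_optimal n C f R \<sigma> y z \<eta> \<longleftrightarrow>
     FZS_LP_feasible n C R \<sigma> y z \<eta> \<and>
     (\<forall>y' z' \<eta>'. FZS_LP_feasible n C R \<sigma> y' z' \<eta>' \<longrightarrow> FZS_obj n f R z \<eta> \<le> FZS_obj n f R z' \<eta>')"

end

theory Submission
  imports Defs
begin

text \<open>
  For a commodity r the only constraints on \<eta> r are the lower bound 0 and the cuts
  g(t) = v(t) + sum over h < t of (v(h) - v(t)) u(h), so at an optimum \<eta> r equals the
  largest cut, which is nonnegative because the v and u are. Since
  g(t+1) - g(t) = (v(t+1) - v(t)) (1 - sum over h \<le> t of u(h)) and the values v are sorted,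
  g increases as long as the partial sums of u stay below 1 and decreases afterwards;
  hence the largest cut is the one at the first index where the partial sum reaches 1.
\<close>

definition cut_rhs :: "(nat \<Rightarrow> real) \<Rightarrow> (nat \<Rightarrow> real) \<Rightarrow> nat \<Rightarrow> real" where
  "cut_rhs v u t = v t + (\<Sum>h \<in> {1..<t}. (v h - v t) * u h)"

definition covering_index :: "nat \<Rightarrow> (nat \<Rightarrow> real) \<Rightarrow> nat" where
  "covering_index N u = (LEAST t. t \<in> {1..N} \<and> 1 \<le> (\<Sum>h \<in> {1..t}. u h))"

lemma cut_rhs_eq:
  "cut_rhs v u t = v t * (1 - (\<Sum>h \<in> {1..<t}. u h)) + (\<Sum>h \<in> {1..<t}. v h * u h)"
  unfolding cut_rhs_def by (simp add: algebra_simps sum_subtractf sum_distrib_left)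

lemma cut_rhs_Suc_diff:
  "cut_rhs v u (Suc k) - cut_rhs v u k = (v (Suc k) - v k) * (1 - (\<Sum>h \<in> {1..k}. u h))"
proof (cases k)
  case (Suc m)
  have "{1..<Suc k} = insert k {1..<k}" "{1..k} = insert k {1..<k}"
    using Suc by auto
  then show ?thesis
    unfolding cut_rhs_eq by (simp add: algebra_simps)
qed (simp add: cut_rhs_def)

lemma
  assumes "\<exists>t \<in> {1..N}. 1 \<le> (\<Sum>h \<in> {1..t}. u h)"
  shows covering_index_mem: "covering_index N u \<in> {1..N}"
    and covering_index_covers: "1 \<le> (\<Sum>h \<in> {1..covering_index N u}. u h)"
  using LeastI_ex[OF assms[unfolded Bex_def]] unfolding covering_index_def by auto

lemma sum_lt_one_below_covering_index:
  assumes "\<exists>t \<in> {1..N}. 1 \<le> (\<Sum>h \<in> {1..t}. u h)" and "k < covering_index N u"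
  shows "(\<Sum>h \<in> {1..k}. u h) < 1"
proof (cases "k = 0")
  case False
  with assms have "k \<in> {1..N}"
    using covering_index_mem[OF assms(1)] by auto
  with not_less_Least[OF assms(2)[unfolded covering_index_def]] show ?thesis
    by auto
qed simp

lemma cut_rhs_le_covering_index:
  fixes v u :: "nat \<Rightarrow> real"
  assumes v_mono: "\<And>s t. 1 \<le> s \<Longrightarrow> s \<le> t \<Longrightarrow> t \<le> N \<Longrightarrow> v s \<le> v t"
    and u_nonneg: "\<And>h. h \<in> {1..N} \<Longrightarrow> 0 \<le> u h"
    and covered: "\<exists>t \<in> {1..N}. 1 \<le> (\<Sum>h \<in> {1..t}. u h)"
    and t: "t \<in> {1..N}"
  shows "cut_rhs v u t \<le> cut_rhs v u (covering_index N u)"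
proof -
  let ?g = "cut_rhs v u" and ?tb = "covering_index N u"
  have tb: "?tb \<in> {1..N}"
    using covering_index_mem[OF covered] .
  have v_step: "0 \<le> v (Suc k) - v k" if "1 \<le> k" "k < N" for k
    using v_mono[of k "Suc k"] that by simp
  show ?thesis
  proof (cases "t \<le> ?tb")
    case True
    have "0 \<le> (\<Sum>k = t..<?tb. ?g (Suc k) - ?g k)"
    proof (rule sum_nonneg)
      fix k assume "k \<in> {t..<?tb}"
      then have "(\<Sum>h \<in> {1..k}. u h) < 1" "0 \<le> v (Suc k) - v k"
        using sum_lt_one_below_covering_index[OF covered] v_step t tb by auto
      then show "0 \<le> ?g (Suc k) - ?g k"
        unfolding cut_rhs_Suc_diff by simp
    qed
    with True show ?thesis
      by (simp add: sum_Suc_diff')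
  next
    case False
    have "(\<Sum>k = ?tb..<t. ?g (Suc k) - ?g k) \<le> 0"
    proof (rule sum_nonpos)
      fix k assume k: "k \<in> {?tb..<t}"
      have "(\<Sum>h \<in> {1..?tb}. u h) \<le> (\<Sum>h \<in> {1..k}. u h)"
        by (rule sum_mono2) (use k t u_nonneg in auto)
      with covering_index_covers[OF covered]
      have "1 - (\<Sum>h \<in> {1..k}. u h) \<le> 0"
        by linarith
      moreover have "0 \<le> v (Suc k) - v k"
        using v_step k t tb by auto
      ultimately show "?g (Suc k) - ?g k \<le> 0"
        unfolding cut_rhs_Suc_diff by (simp add: mult_nonneg_nonpos)
    qed
    with False show ?thesis
      by (simp add: sum_Suc_diff')
  qed
qed

lemma cut_rhs_covering_index_nonneg:
  fixes v u :: "nat \<Rightarrow> real"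
  assumes v_nonneg: "\<And>h. h \<in> {1..N} \<Longrightarrow> 0 \<le> v h"
    and u_nonneg: "\<And>h. h \<in> {1..N} \<Longrightarrow> 0 \<le> u h"
    and covered: "\<exists>t \<in> {1..N}. 1 \<le> (\<Sum>h \<in> {1..t}. u h)"
  shows "0 \<le> cut_rhs v u (covering_index N u)"
proof -
  let ?tb = "covering_index N u"
  have tb: "?tb \<in> {1..N}"
    using covering_index_mem[OF covered] .
  have "{1..<?tb} = {1..?tb - 1}"
    using tb by auto
  then have "(\<Sum>h \<in> {1..<?tb}. u h) < 1"
    using sum_lt_one_below_covering_index[OF covered, of "?tb - 1"] tb by auto
  moreover have "0 \<le> (\<Sum>h \<in> {1..<?tb}. v h * u h)"
    by (rule sum_nonneg) (use tb v_nonneg u_nonneg in auto)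
  ultimately show ?thesis
    unfolding cut_rhs_eq using v_nonneg[OF tb] by auto
qed

lemma Ccost_nonneg:
  assumes "\<forall>i \<in> nodes n. \<forall>j \<in> nodes n. 0 \<le> c i j"
    and "orig r \<in> nodes n" "dest r \<in> nodes n" "0 \<le> w r"
    and "0 \<le> \<alpha>" "0 \<le> \<gamma>" "0 \<le> \<theta>"
    and "i \<in> nodes n" "j \<in> nodes n"
  shows "0 \<le> Ccost c \<alpha> \<gamma> \<theta> orig dest w r i j"
  unfolding Ccost_def using assms by (simp add: mult_nonneg_nonneg)

lemma items_subset: "items n C r \<subseteq> Inl ` edges n \<union> Inr ` nodes n"
  unfolding items_def Er_def Vr_def by auto

lemma edge_nodes: "e \<in> edges n \<Longrightarrow> fst e \<in> nodes n \<and> snd e \<in> nodes n"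
  unfolding edges_def nodes_def by auto

lemma itemval_nonneg:
  assumes C_nonneg: "\<forall>i \<in> nodes n. \<forall>j \<in> nodes n. 0 \<le> C r i j" and x: "x \<in> items n C r"
  shows "0 \<le> itemval C r x"
proof (cases x)
  case (Inl e)
  with x have "e \<in> edges n"
    using items_subset[of n C r] by auto
  then have "fst e \<in> nodes n" "snd e \<in> nodes n"
    by (simp_all add: edge_nodes)
  with Inl C_nonneg show ?thesis
    unfolding itemval_def Fval_def by simp
next
  case (Inr i)
  then have "i \<in> nodes n"
    using x items_subset[of n C r] by auto
  with Inr C_nonneg show ?thesis
    unfolding itemval_def Hval_def by simp
qed

lemma itemvar_nonneg:
  assumes "FZS_LP_feasible n C R \<sigma> y z \<eta>" and "x \<in> items n C r"
  shows "0 \<le> itemvar y z x"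
proof -
  have "x \<in> Inl ` edges n \<union> Inr ` nodes n"
    using assms(2) items_subset[of n C r] by blast
  moreover have "\<forall>e \<in> edges n. 0 \<le> y e" "\<forall>i \<in> nodes n. 0 \<le> z i"
    using assms(1) unfolding FZS_LP_feasible_def by simp_all
  ultimately show ?thesis
    unfolding itemvar_def by auto
qed

lemma valid_order_item:
  "valid_order n C r \<tau> \<Longrightarrow> h \<in> {1..Tsize n C r} \<Longrightarrow> \<tau> h \<in> items n C r"
  unfolding valid_order_def using bij_betwE by blast

lemma valid_order_vbar_mono:
  "valid_order n C r (\<sigma> r) \<Longrightarrow> 1 \<le> s \<Longrightarrow> s \<le> t \<Longrightarrow> t \<le> Tsize n C r \<Longrightarrow>
    vbar C \<sigma> r s \<le> vbar C \<sigma> r t"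
  unfolding valid_order_def vbar_def by blast

lemma vbar_nonneg:
  assumes "valid_order n C r (\<sigma> r)" and "\<forall>i \<in> nodes n. \<forall>j \<in> nodes n. 0 \<le> C r i j"
    and "h \<in> {1..Tsize n C r}"
  shows "0 \<le> vbar C \<sigma> r h"
  unfolding vbar_def by (rule itemval_nonneg[OF assms(2) valid_order_item[OF assms(1,3)]])

lemma uvar_nonneg:
  assumes "FZS_LP_feasible n C R \<sigma> y z \<eta>" and "valid_order n C r (\<sigma> r)"
    and "h \<in> {1..Tsize n C r}"
  shows "0 \<le> uvar \<sigma> y z r h"
  unfolding uvar_def by (rule itemvar_nonneg[OF assms(1) valid_order_item[OF assms(2,3)]])

lemma FZS_LP_optimal_eta_sum:
  assumes opt: "FZS_LP_optimal n C f R \<sigma> y z \<eta>"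
    and G_nonneg: "\<And>r. r \<in> R \<Longrightarrow> 0 \<le> G r"
    and G_bound: "\<And>r t. r \<in> R \<Longrightarrow> t \<in> {1..Tsize n C r} \<Longrightarrow>
                    cut_rhs (vbar C \<sigma> r) (uvar \<sigma> y z r) t \<le> G r"
    and G_cut: "\<And>r. r \<in> R \<Longrightarrow> \<exists>t \<in> {1..Tsize n C r}. G r = cut_rhs (vbar C \<sigma> r) (uvar \<sigma> y z r) t"
  shows "(\<Sum>r \<in> R. \<eta> r) = (\<Sum>r \<in> R. G r)"
proof -
  have feas: "FZS_LP_feasible n C R \<sigma> y z \<eta>"
    using opt unfolding FZS_LP_optimal_def by blast
  then have "FZS_LP_feasible n C R \<sigma> y z G"
    using G_nonneg G_bound unfolding FZS_LP_feasible_def cut_rhs_def by auto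
  with opt have "FZS_obj n f R z \<eta> \<le> FZS_obj n f R z G"
    unfolding FZS_LP_optimal_def by blast
  then have "(\<Sum>r \<in> R. \<eta> r) \<le> (\<Sum>r \<in> R. G r)"
    unfolding FZS_obj_def by simp
  moreover have "(\<Sum>r \<in> R. G r) \<le> (\<Sum>r \<in> R. \<eta> r)"
  proof (rule sum_mono)
    fix r assume r: "r \<in> R"
    then obtain t where "t \<in> {1..Tsize n C r}" "G r = cut_rhs (vbar C \<sigma> r) (uvar \<sigma> y z r) t"
      using G_cut by blast
    with r feas show "G r \<le> \<eta> r"
      unfolding FZS_LP_feasible_def cut_rhs_def by auto
  qed
  ultimately show ?thesis
    by linarith
qed

lemma FZS_LP_optimal_eta_sum_eq_covering_cut:
  assumes opt: "FZS_LP_optimal n C f R \<sigma> y z \<eta>"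
    and sorted: "\<forall>r \<in> R. valid_order n C r (\<sigma> r)"
    and C_nonneg: "\<forall>r \<in> R. \<forall>i \<in> nodes n. \<forall>j \<in> nodes n. 0 \<le> C r i j"
    and covered: "\<forall>r \<in> R. \<exists>t \<in> {1..Tsize n C r}. 1 \<le> (\<Sum>h \<in> {1..t}. uvar \<sigma> y z r h)"
  shows "(\<Sum>r \<in> R. \<eta> r) =
    (\<Sum>r \<in> R. cut_rhs (vbar C \<sigma> r) (uvar \<sigma> y z r) (covering_index (Tsize n C r) (uvar \<sigma> y z r)))"
proof (rule FZS_LP_optimal_eta_sum[OF opt])
  fix r assume r: "r \<in> R"
  have feas: "FZS_LP_feasible n C R \<sigma> y z \<eta>"
    using opt unfolding FZS_LP_optimal_def by blast
  note v_mono = valid_order_vbar_mono[of n C r \<sigma>]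
  note v_nonneg = vbar_nonneg[of n C r \<sigma>]
  note u_nonneg = uvar_nonneg[OF feas, of r]
  note covered = covered[rule_format, OF r]
  show "0 \<le> cut_rhs (vbar C \<sigma> r) (uvar \<sigma> y z r) (covering_index (Tsize n C r) (uvar \<sigma> y z r))"
    by (rule cut_rhs_covering_index_nonneg) (use v_nonneg u_nonneg covered r sorted C_nonneg in auto)
  show "cut_rhs (vbar C \<sigma> r) (uvar \<sigma> y z r) t
          \<le> cut_rhs (vbar C \<sigma> r) (uvar \<sigma> y z r) (covering_index (Tsize n C r) (uvar \<sigma> y z r))"
    if "t \<in> {1..Tsize n C r}" for t
    by (rule cut_rhs_le_covering_index) (use v_mono u_nonneg covered r sorted that in auto)
  show "\<exists>t \<in> {1..Tsize n C r}.
          cut_rhs (vbar C \<sigma> r) (uvar \<sigma> y z r) (covering_index (Tsize n C r) (uvar \<sigma> y z r))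
          = cut_rhs (vbar C \<sigma> r) (uvar \<sigma> y z r) t"
    using covering_index_mem[OF covered] by blast
qed

theorem proposition2:
  fixes n :: nat and c :: "nat \<Rightarrow> nat \<Rightarrow> real" and f :: "nat \<Rightarrow> real"
    and R :: "'r set" and orig dest :: "'r \<Rightarrow> nat" and w :: "'r \<Rightarrow> real"
    and \<alpha> \<gamma> \<theta> :: real
    and \<sigma> :: "'r \<Rightarrow> nat \<Rightarrow> (nat \<times> nat) + nat"
    and y :: "nat \<times> nat \<Rightarrow> real" and z :: "nat \<Rightarrow> real" and \<eta> :: "'r \<Rightarrow> real"
  defines "C \<equiv> Ccost c \<alpha> \<gamma> \<theta> orig dest w"
  defines "tbar \<equiv> \<lambda>r. LEAST t. t \<in> {1..Tsize n C r} \<and> (\<Sum>h \<in> {1..t}. uvar \<sigma> y z r h) \<ge> 1"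
  assumes c_nonneg: "\<forall>i \<in> nodes n. \<forall>j \<in> nodes n. c i j \<ge> 0"
    and c_diag: "\<forall>i \<in> nodes n. c i i = 0"
    and c_tri: "\<forall>i \<in> nodes n. \<forall>j \<in> nodes n. \<forall>k \<in> nodes n. c i k \<le> c i j + c j k"
    and f_nonneg: "\<forall>i \<in> nodes n. f i \<ge> 0"
    and R_fin: "finite R"
    and od: "\<forall>r \<in> R. orig r \<in> nodes n \<and> dest r \<in> nodes n"
    and w_nonneg: "\<forall>r \<in> R. w r \<ge> 0"
    and alpha: "0 \<le> \<alpha>" "\<alpha> \<le> 1" and gamma: "\<gamma> > \<alpha>" and theta: "\<theta> > \<alpha>"
    and sorted: "\<forall>r \<in> R. valid_order n C r (\<sigma> r)"
    and opt: "FZS_LP_optimal n C f R \<sigma> y z \<eta>"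
    and tbar_ex: "\<forall>r \<in> R. \<exists>t \<in> {1..Tsize n C r}. (\<Sum>h \<in> {1..t}. uvar \<sigma> y z r h) \<ge> 1"
  shows "FZS_obj n f R z \<eta> =
    (\<Sum>i \<in> nodes n. f i * z i)
    + (\<Sum>r \<in> R. vbar C \<sigma> r (tbar r) * (1 - (\<Sum>h \<in> {1..<tbar r}. uvar \<sigma> y z r h))
                + (\<Sum>h \<in> {1..<tbar r}. vbar C \<sigma> r h * uvar \<sigma> y z r h))"
proof -
  have C_nonneg: "\<forall>r \<in> R. \<forall>i \<in> nodes n. \<forall>j \<in> nodes n. 0 \<le> C r i j"
  proof (intro ballI)
    fix r i j assume "r \<in> R" "i \<in> nodes n" "j \<in> nodes n"
    with od w_nonneg alpha gamma theta show "0 \<le> C r i j"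
      unfolding C_def by (intro Ccost_nonneg[OF c_nonneg]) auto
  qed
  have tbar: "covering_index (Tsize n C r) (uvar \<sigma> y z r) = tbar r" for r
    unfolding tbar_def covering_index_def by simp
  show ?thesis
    using FZS_LP_optimal_eta_sum_eq_covering_cut[OF opt sorted C_nonneg tbar_ex]
    unfolding FZS_obj_def cut_rhs_eq tbar by simp
qed

end
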